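(* Let $n$, $r$ and $k$ be positive integers with $n\ge 2r+1$, and suppose $\binom{n-r}{r}\ge k$ (so that $\gamma_{\times k,t}(K(n,r))$ is defined). Then $$\gamma_{\times k,t}(K(n,r))\ \ge\ \gamma_{\times k,t}(K(n+1,r)).$$
   Context: For integers $n\ge 2r$, the Kneser graph $K(n,r)$ has as vertices the $r$-element subsets of $[n]=\{1,\dots,n\}$, two vertices being adjacent iff they are disjoint sets. For a graph $G$ and positive integer $k$, a set $D\subseteq V(G)$ is a $k$-tuple total dominating set if $|N_G(u)\cap D|\ge k$ for every $u\in V(G)$, where $N_G(u)$ is the open neighborhood; $\gamma_{\times k,t}(G)$ is the minimum cardinality of such a set. It is defined only when the minimum degree of $G$ is at least $k$; the minimum degree of $K(n,r)$ is $\binom{n-r}{r}$. *)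

theory Defs
  imports Main
begin

definition kneser_vertices :: "nat \<Rightarrow> nat \<Rightarrow> nat set set" where
  "kneser_vertices n r = {A. A \<subseteq> {1..n} \<and> card A = r}"

definition kneser_nbhd :: "nat \<Rightarrow> nat \<Rightarrow> nat set \<Rightarrow> nat set set" where
  "kneser_nbhd n r u = {v \<in> kneser_vertices n r. u \<inter> v = {}}"

definition kneser_ktuple_tdom :: "nat \<Rightarrow> nat \<Rightarrow> nat \<Rightarrow> nat set set \<Rightarrow> bool" where
  "kneser_ktuple_tdom n r k D \<longleftrightarrow> D \<subseteq> kneser_vertices n r \<and>
     (\<forall>u \<in> kneser_vertices n r. card (kneser_nbhd n r u \<inter> D) \<ge> k)"

definition gamma_ktuple_t_kneser :: "nat \<Rightarrow> nat \<Rightarrow> nat \<Rightarrow> nat" where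
  "gamma_ktuple_t_kneser n r k = (LEAST m. \<exists>D. kneser_ktuple_tdom n r k D \<and> card D = m)"

end

theory Submission
  imports Defs
begin

text \<open>Every k-tuple total dominating set D of K(n,r) is also one of K(n+1,r): a vertex u of
K(n+1,r) contains at most r elements of [n], so these can be completed to a vertex w of K(n,r),
and every neighbour of w in K(n,r) is a neighbour of u in K(n+1,r). Hence a minimum k-tuple total
dominating set of K(n,r), which exists since V(K(n,r)) itself is one, witnesses the inequality.\<close>

lemma finite_kneser_vertices: "finite (kneser_vertices n r)"
proof (rule finite_subset)
  show "kneser_vertices n r \<subseteq> Pow {1..n}"
    by (auto simp: kneser_vertices_def)
qed simp

lemma kneser_vertices_mono:
  assumes "m \<le> n"
  shows "kneser_vertices m r \<subseteq> kneser_vertices n r"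
  using assms by (auto simp: kneser_vertices_def)

lemma finite_kneser_nbhd: "finite (kneser_nbhd n r u)"
  using finite_kneser_vertices by (simp add: kneser_nbhd_def)

lemma card_kneser_nbhd:
  assumes "u \<in> kneser_vertices n r"
  shows "card (kneser_nbhd n r u) = (n - r) choose r"
proof -
  have u: "u \<subseteq> {1..n}" "card u = r"
    using assms by (auto simp: kneser_vertices_def)
  have "kneser_nbhd n r u = {v. v \<subseteq> {1..n} - u \<and> card v = r}"
    by (auto simp: kneser_nbhd_def kneser_vertices_def)
  moreover have "card ({1..n} - u) = n - r"
    using u by (simp add: card_Diff_subset finite_subset)
  ultimately show ?thesis
    by (simp add: n_subsets)
qed

lemma kneser_ktuple_tdom_vertices:
  assumes "k \<le> (n - r) choose r"
  shows "kneser_ktuple_tdom n r k (kneser_vertices n r)"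
proof -
  have "kneser_nbhd n r u \<inter> kneser_vertices n r = kneser_nbhd n r u" for u
    by (auto simp: kneser_nbhd_def)
  then show ?thesis
    using assms by (simp add: kneser_ktuple_tdom_def card_kneser_nbhd)
qed

lemma gamma_ktuple_t_kneser_le:
  assumes "kneser_ktuple_tdom n r k D"
  shows "gamma_ktuple_t_kneser n r k \<le> card D"
  unfolding gamma_ktuple_t_kneser_def using assms by (intro Least_le) blast

lemma gamma_ktuple_t_kneser_attained:
  assumes "kneser_ktuple_tdom n r k D"
  obtains D' where "kneser_ktuple_tdom n r k D'" "card D' = gamma_ktuple_t_kneser n r k"
  using LeastI_ex[of "\<lambda>m. \<exists>D. kneser_ktuple_tdom n r k D \<and> card D = m"] assms that
  unfolding gamma_ktuple_t_kneser_def by blast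

lemma kneser_nbhd_subset_Suc:
  assumes u: "u \<in> kneser_vertices (n + 1) r" and "r \<le> n"
  obtains w where "w \<in> kneser_vertices n r" "kneser_nbhd n r w \<subseteq> kneser_nbhd (n + 1) r u"
proof -
  have "finite u" "card u = r"
    using u by (auto simp: kneser_vertices_def finite_subset)
  then have "card (u \<inter> {1..n}) \<le> r"
    by (metis card_mono inf_le1)
  then obtain w where w: "u \<inter> {1..n} \<subseteq> w" "w \<subseteq> {1..n}" "card w = r"
    using exists_subset_between[of "u \<inter> {1..n}" r "{1..n}"] \<open>r \<le> n\<close> by auto
  have "kneser_nbhd n r w \<subseteq> kneser_nbhd (n + 1) r u"
    using w(1) by (auto simp: kneser_nbhd_def kneser_vertices_def)
  with w show ?thesis
    using that by (simp add: kneser_vertices_def)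
qed

lemma kneser_ktuple_tdom_Suc:
  assumes D: "kneser_ktuple_tdom n r k D" and "r \<le> n"
  shows "kneser_ktuple_tdom (n + 1) r k D"
  unfolding kneser_ktuple_tdom_def
proof (intro conjI ballI)
  show "D \<subseteq> kneser_vertices (n + 1) r"
    using D kneser_vertices_mono[of n "n + 1" r] by (auto simp: kneser_ktuple_tdom_def)
next
  fix u
  assume "u \<in> kneser_vertices (n + 1) r"
  then obtain w where w: "w \<in> kneser_vertices n r"
    and nbhd: "kneser_nbhd n r w \<subseteq> kneser_nbhd (n + 1) r u"
    using kneser_nbhd_subset_Suc \<open>r \<le> n\<close> by blast
  have "k \<le> card (kneser_nbhd n r w \<inter> D)"
    using D w by (simp add: kneser_ktuple_tdom_def)
  also have "\<dots> \<le> card (kneser_nbhd (n + 1) r u \<inter> D)"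
    using nbhd by (intro card_mono) (auto simp: finite_kneser_nbhd)
  finally show "k \<le> card (kneser_nbhd (n + 1) r u \<inter> D)" .
qed

theorem theorem2p1:
  fixes n r k :: nat
  assumes "r \<ge> 1" and "k \<ge> 1" and "n \<ge> 2 * r + 1"
    and "(n - r) choose r \<ge> k"
  shows "gamma_ktuple_t_kneser n r k \<ge> gamma_ktuple_t_kneser (n + 1) r k"
proof -
  obtain D where D: "kneser_ktuple_tdom n r k D" "card D = gamma_ktuple_t_kneser n r k"
    using gamma_ktuple_t_kneser_attained kneser_ktuple_tdom_vertices assms(4) by blast
  have "kneser_ktuple_tdom (n + 1) r k D"
    using kneser_ktuple_tdom_Suc D(1) assms(3) by simp
  then show ?thesis
    using gamma_ktuple_t_kneser_le D(2) by metis
qed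

end
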